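(* Let $q\ge5$ be a prime power and let $\mathcal{C}_\mathscr{C}$ be the $[q+1,q-3,5]_q$ code with parity check matrix whose columns are the vectors $(1,t,t^2,t^3)$, $t\in\mathbb{F}_q$, and $(0,0,0,1)$. Let $\mathcal{V}^{(3)}$ be a weight-$3$ coset of $\mathcal{C}_\mathscr{C}$. Then $B_0(\mathcal{V}^{(3)})=B_1(\mathcal{V}^{(3)})=B_2(\mathcal{V}^{(3)})=0$, $$B_3(\mathcal{V}^{(3)})\in\begin{cases}\{\frac{q^2-3q+2}{6},\frac{q^2-q}{6}\}& q\equiv1\pmod3,\\ \{\frac{q^2-3q+2}{6},\frac{q^2-q-2}{6},\frac{q^2-q+4}{6}\}& q\equiv-1\pmod3,\\ \{\frac{q^2-3q}{6},\frac{q^2-q}{6}\}& q\equiv0\pmod3,\end{cases}$$ $$B_4(\mathcal{V}^{(3)})=\binom{q+1}{4}-(q-2)B_3(\mathcal{V}^{(3)}),$$ and for $w\ge5$ $$B_w(\mathcal{V}^{(3)})=A_w(\mathcal{C}_\mathscr{C})+(-1)^{w}\left(\binom{q+1}{w}\binom{w-1}{3}-\binom{q-2}{w-3}B_3(\mathcal{V}^{(3)})\right).$$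
   Context: A coset of a linear code $\mathcal{C}\subseteq\mathbb{F}_q^n$ is a set $\mathbf{v}+\mathcal{C}$; its weight is the minimum Hamming weight of its vectors. $B_w(\mathcal{V})$ is the number of vectors of Hamming weight $w$ in the coset $\mathcal{V}$, and $A_w(\mathcal{C}_\mathscr{C})$ is the number of codewords of Hamming weight $w$ in $\mathcal{C}_\mathscr{C}$. *)

theory Defs
  imports Main
begin

text \<open>Coordinates of F_q^(q+1) are indexed by 'a option: Some t is the column
(1,t,t^2,t^3), None is the column (0,0,0,1) of the parity check matrix.\<close>

definition pc_entry :: "nat \<Rightarrow> 'a::field option \<Rightarrow> 'a" where
  "pc_entry i p = (case p of Some t \<Rightarrow> t ^ i | None \<Rightarrow> (if i = 3 then 1 else 0))"

definition arc_code :: "('a::{field,finite} option \<Rightarrow> 'a) set" where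
  "arc_code = {c. \<forall>i<4. (\<Sum>p\<in>UNIV. pc_entry i p * c p) = 0}"

definition hweight :: "('b \<Rightarrow> 'a::zero) \<Rightarrow> nat" where
  "hweight x = card {p. x p \<noteq> 0}"

definition coset_of :: "('a::{field,finite} option \<Rightarrow> 'a) \<Rightarrow> ('a option \<Rightarrow> 'a) set" where
  "coset_of v = {(\<lambda>p. v p + c p) | c. c \<in> arc_code}"

definition coset_weight :: "('b \<Rightarrow> 'a::zero) set \<Rightarrow> nat" where
  "coset_weight V = Min (hweight ` V)"

definition B_count :: "nat \<Rightarrow> ('b \<Rightarrow> 'a::zero) set \<Rightarrow> nat" where
  "B_count w V = card {x\<in>V. hweight x = w}"

definition A_count :: "nat \<Rightarrow> ('b \<Rightarrow> 'a::zero) set \<Rightarrow> nat" where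
  "A_count w C = card {c\<in>C. hweight c = w}"

end

theory Submission
  imports Defs "HOL-Computational_Algebra.Polynomial" "HOL-Library.Cardinality"
begin

lemma card_eq_sum_card_fibres:
  assumes "finite S" "finite T" "g ` S \<subseteq> T"
  shows "card S = (\<Sum>y\<in>T. card {x\<in>S. g x = y})"
  using sum.group[OF assms, of "\<lambda>_. 1::nat"] by (simp flip: card_eq_sum)

lemma card_supersets:
  assumes "card T \<le> w"
  shows "card {S :: 'a::finite set. card S = w \<and> T \<subseteq> S} = (card (UNIV :: 'a set) - card T) choose (w - card T)"
proof -
  have "bij_betw (\<lambda>S. S - T) {S. card S = w \<and> T \<subseteq> S} {R. R \<subseteq> - T \<and> card R = w - card T}"
  proof (rule bij_betw_byWitness[where f' = "\<lambda>R. R \<union> T"])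
    show "(\<lambda>S. S - T) ` {S. card S = w \<and> T \<subseteq> S} \<subseteq> {R. R \<subseteq> - T \<and> card R = w - card T}"
      by (auto simp: card_Diff_subset)
    show "(\<lambda>R. R \<union> T) ` {R. R \<subseteq> - T \<and> card R = w - card T} \<subseteq> {S. card S = w \<and> T \<subseteq> S}"
      using assms by (auto simp: card_Un_disjoint disjoint_eq_subset_Compl)
  qed auto
  then have "card {S :: 'a set. card S = w \<and> T \<subseteq> S} = card {R. R \<subseteq> - T \<and> card R = w - card T}"
    by (rule bij_betw_same_card)
  also have "\<dots> = card (- T) choose (w - card T)"
    by (rule n_subsets) simp
  finally show ?thesis
    by (simp add: Compl_eq_Diff_UNIV card_Diff_subset)
qed

lemma sum_Pow_card:
  assumes "finite S"
  shows "(\<Sum>T\<in>Pow S. f (card T)) = (\<Sum>k\<le>card S. of_nat (card S choose k) * f k)"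
proof -
  have "(\<Sum>T\<in>Pow S. f (card T)) = (\<Sum>k\<le>card S. \<Sum>T\<in>{T\<in>Pow S. card T = k}. f (card T))"
    using assms by (intro sum.group[symmetric]) (auto intro: card_mono)
  also have "\<dots> = (\<Sum>k\<le>card S. of_nat (card S choose k) * f k)"
    using n_subsets[OF assms] by (intro sum.cong) (simp_all add: Pow_def)
  finally show ?thesis .
qed

lemma alternating_partial_sum_binomial:
  "m < w \<Longrightarrow> (\<Sum>k\<le>m. (-1) ^ (w - k) * of_nat (w choose k) :: int) = (-1) ^ (w - m) * of_nat ((w - 1) choose m)"
proof (induction m)
  case (Suc m)
  obtain n where w: "w = Suc n" and "m < n"
    using Suc.prems by (cases w) auto
  then have sign: "(-1::int) ^ (Suc n - m) = - ((-1) ^ (n - m))"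
    by (simp add: Suc_diff_le)
  have "(\<Sum>k\<le>Suc m. (-1) ^ (w - k) * of_nat (w choose k) :: int)
      = (-1) ^ (w - Suc m) * (of_nat (w choose Suc m) - of_nat (n choose m))"
    using Suc by (simp add: w sign algebra_simps)
  also have "\<dots> = (-1) ^ (w - Suc m) * of_nat ((w - 1) choose Suc m)"
    by (simp add: w)
  finally show ?case .
qed simp

locale symmetric_ternary_relation =
  fixes X :: "'b set" and R :: "'b \<Rightarrow> 'b \<Rightarrow> 'b \<Rightarrow> bool"
  assumes finite_X: "finite X"
    and sym12: "R x y z \<Longrightarrow> R y x z" and sym23: "R x y z \<Longrightarrow> R x z y"
    and unique: "x \<in> X \<Longrightarrow> y \<in> X \<Longrightarrow> \<exists>!z. z \<in> X \<and> R x y z"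
begin

definition triples :: "('b \<times> 'b \<times> 'b) set" where
  "triples = {(x,y,z). x \<in> X \<and> y \<in> X \<and> z \<in> X \<and> R x y z}"

definition third :: "'b \<Rightarrow> 'b \<Rightarrow> 'b" where
  "third x y = (THE z. z \<in> X \<and> R x y z)"

lemma R_perms: "R x y z \<Longrightarrow> R x z y \<and> R y x z \<and> R y z x \<and> R z x y \<and> R z y x"
  by (blast intro: sym12 sym23)

lemma third: "x \<in> X \<Longrightarrow> y \<in> X \<Longrightarrow> third x y \<in> X \<and> R x y (third x y)"
  using theI'[OF unique] by (simp add: third_def)

lemma third_unique: "x \<in> X \<Longrightarrow> y \<in> X \<Longrightarrow> z \<in> X \<Longrightarrow> R x y z \<Longrightarrow> z = third x y"
  using unique third by blast

lemma finite_triples: "finite triples"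
  by (rule finite_subset[of _ "X \<times> X \<times> X"]) (auto simp: triples_def finite_X)

lemma card_triples: "card triples = card X * card X"
proof -
  have "triples = (\<lambda>(x,y). (x, y, third x y)) ` (X \<times> X)"
    by (auto simp: triples_def image_iff third intro: third_unique)
  then show ?thesis
    by (simp add: card_image inj_on_def card_cartesian_product)
qed

lemma card_distinct_triples:
  "card {(x,y,z)\<in>triples. x \<noteq> y \<and> y \<noteq> z \<and> x \<noteq> z}
     = 6 * card {T. T \<subseteq> X \<and> card T = 3 \<and> (\<exists>x y z. T = {x,y,z} \<and> R x y z)}"
    (is "card ?Dist = 6 * card ?Good")
proof -
  have fibre: "card {(x,y,z)\<in>?Dist. {x,y,z} = T} = 6" if "T \<in> ?Good" for T
  proof -
    obtain x y z where T: "T = {x,y,z}" "R x y z" "T \<subseteq> X" "card T = 3"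
      using \<open>T \<in> ?Good\<close> by blast
    then have distinct: "x \<noteq> y" "y \<noteq> z" "x \<noteq> z"
      by (auto simp: card_insert_if split: if_splits)
    let ?perms = "{(x,y,z), (x,z,y), (y,x,z), (y,z,x), (z,x,y), (z,y,x)}"
    have "{(x',y',z')\<in>?Dist. {x',y',z'} = T} = ?perms"
    proof
      show "{(x',y',z')\<in>?Dist. {x',y',z'} = T} \<subseteq> ?perms"
      proof
        fix t assume "t \<in> {(x',y',z')\<in>?Dist. {x',y',z'} = T}"
        then obtain a b c where t: "t = (a,b,c)" "a \<noteq> b" "b \<noteq> c" "a \<noteq> c" "{a,b,c} = T"
          by auto
        then have "a \<in> T" "b \<in> T" "c \<in> T"
          by auto
        then show "t \<in> ?perms"
          using T(1) t distinct by auto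
      qed
      show "?perms \<subseteq> {(x',y',z')\<in>?Dist. {x',y',z'} = T}"
        using T distinct R_perms[OF T(2)] by (auto simp: triples_def)
    qed
    then show ?thesis
      using distinct by simp
  qed
  have "finite ?Dist"
    by (rule finite_subset[OF _ finite_triples]) auto
  moreover have "finite ?Good"
    by (rule finite_subset[of _ "Pow X"]) (auto simp: finite_X)
  moreover have "(\<lambda>(x,y,z). {x,y,z}) ` ?Dist \<subseteq> ?Good"
    by (auto simp: triples_def)
  ultimately have "card ?Dist = (\<Sum>T\<in>?Good. card {(x,y,z)\<in>?Dist. {x,y,z} = T})"
    by (subst card_eq_sum_card_fibres) (simp_all add: case_prod_unfold)
  then show ?thesis
    using fibre by simp
qed

lemma card_degenerate_triples:
  "card {(x,y,z)\<in>triples. x = y \<or> y = z \<or> x = z} + 2 * card {x\<in>X. R x x x} = 3 * card X"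
proof -
  define D12 where "D12 = {(x,y,z)\<in>triples. x = y}"
  define D23 where "D23 = {(x,y,z)\<in>triples. y = z}"
  define D13 where "D13 = {(x,y,z)\<in>triples. x = z}"
  have third_perms: "R (third x x) x x" "R x (third x x) x" if "x \<in> X" for x
    using R_perms third[OF that that] by blast+
  have "D12 = (\<lambda>x. (x, x, third x x)) ` X" "D23 = (\<lambda>y. (third y y, y, y)) ` X"
    "D13 = (\<lambda>x. (x, third x x, x)) ` X"
    by (auto simp: D12_def D23_def D13_def triples_def image_iff third third_perms
        intro: third_unique dest: R_perms)
  then have card_D: "card D12 = card X" "card D23 = card X" "card D13 = card X"
    by (simp_all add: card_image inj_on_def)
  have diagonal: "D12 \<inter> D23 = (\<lambda>x. (x, x, x)) ` {x\<in>X. R x x x}" "(D12 \<union> D23) \<inter> D13 = D12 \<inter> D23"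
    by (auto simp: D12_def D23_def D13_def triples_def)
  have card_diagonal: "card (D12 \<inter> D23) = card {x\<in>X. R x x x}"
    unfolding diagonal(1) by (simp add: card_image inj_on_def)
  have "finite D12" "finite D23" "finite D13"
    by (auto simp: D12_def D23_def D13_def intro: finite_subset[OF _ finite_triples])
  then have "card (D12 \<union> D23 \<union> D13) + 2 * card (D12 \<inter> D23) = 3 * card X"
    using card_Un_Int[of D12 D23] card_Un_Int[of "D12 \<union> D23" D13] card_D diagonal(2) by simp
  moreover have "{(x,y,z)\<in>triples. x = y \<or> y = z \<or> x = z} = D12 \<union> D23 \<union> D13"
    by (auto simp: D12_def D23_def D13_def)
  ultimately show ?thesis
    using card_diagonal by simp
qed

theorem card_3_sets:
  "6 * card {T. T \<subseteq> X \<and> card T = 3 \<and> (\<exists>x y z. T = {x,y,z} \<and> R x y z)} + 3 * card X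
     = card X * card X + 2 * card {x\<in>X. R x x x}"
proof -
  have "card triples = card {(x,y,z)\<in>triples. x \<noteq> y \<and> y \<noteq> z \<and> x \<noteq> z}
      + card {(x,y,z)\<in>triples. x = y \<or> y = z \<or> x = z}"
    by (subst card_Un_disjoint[symmetric]) (auto intro: finite_subset[OF _ finite_triples] arg_cong[where f = card])
  then show ?thesis
    using card_triples card_distinct_triples card_degenerate_triples by linarith
qed

end

definition column :: "'a::field option \<Rightarrow> nat \<Rightarrow> 'a" where
  "column p i = pc_entry i p"

definition syndrome :: "('a::{field,finite} option \<Rightarrow> 'a) \<Rightarrow> nat \<Rightarrow> 'a" where
  "syndrome w i = (\<Sum>p\<in>UNIV. w p * column p i)"

definition supp :: "('b \<Rightarrow> 'a::zero) \<Rightarrow> 'b set" where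
  "supp w = {p. w p \<noteq> 0}"

definition pairing :: "'a::comm_semiring_0 poly \<Rightarrow> (nat \<Rightarrow> 'a) \<Rightarrow> 'a" where
  "pairing h y = (\<Sum>i<4. coeff h i * y i)"

definition root_factor :: "'a::comm_ring_1 option \<Rightarrow> 'a poly" where
  "root_factor p = (case p of Some a \<Rightarrow> [:-a, 1:] | None \<Rightarrow> 1)"

definition annihilator :: "'a::comm_ring_1 option \<Rightarrow> 'a option \<Rightarrow> 'a option \<Rightarrow> 'a poly" where
  "annihilator x y z = root_factor x * root_factor y * root_factor z"

lemma hweight_eq_card_supp: "hweight w = card (supp w)"
  by (simp add: hweight_def supp_def)

lemma arc_code_eq: "arc_code = {c. \<forall>i<4. syndrome c i = 0}"
  by (simp add: arc_code_def syndrome_def column_def mult.commute)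

lemma coset_of_eq: "coset_of v = {x. \<forall>i<4. syndrome x i = syndrome v i}"
proof -
  have "x \<in> coset_of v \<longleftrightarrow> (\<lambda>p. x p - v p) \<in> arc_code" for x
    unfolding coset_of_def by (auto intro!: exI[of _ "\<lambda>p. x p - v p"])
  then show ?thesis
    by (auto simp: arc_code_eq syndrome_def left_diff_distrib sum_subtractf)
qed

lemma syndrome_diff: "syndrome (\<lambda>p. a p - b p) i = syndrome a i - syndrome b i"
  by (simp add: syndrome_def left_diff_distrib sum_subtractf)

lemma syndrome_add: "syndrome (\<lambda>p. a p + b p) i = syndrome a i + syndrome b i"
  by (simp add: syndrome_def distrib_right sum.distrib)

lemma supp_diff: "supp (\<lambda>p. a p - b p :: 'a::group_add) \<subseteq> supp a \<union> supp b"
  by (auto simp: supp_def)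

lemma supp_add: "supp (\<lambda>p. a p + b p :: 'a::monoid_add) \<subseteq> supp a \<union> supp b"
  by (auto simp: supp_def)

lemma pairing_syndrome: "pairing h (syndrome w) = (\<Sum>p\<in>UNIV. w p * pairing h (column p))"
  unfolding pairing_def syndrome_def sum_distrib_left
  by (rule trans[OF sum.swap]) (simp add: mult_ac)

lemma pairing_column_Some:
  assumes "degree h \<le> 3"
  shows "pairing h (column (Some t)) = poly h t"
proof -
  have "poly h t = (\<Sum>i\<le>degree h. coeff h i * t ^ i)"
    by (rule poly_altdef)
  also have "\<dots> = (\<Sum>i<4. coeff h i * t ^ i)"
    using assms by (intro sum.mono_neutral_left) (auto simp: coeff_eq_0)
  finally show ?thesis
    by (simp add: pairing_def column_def pc_entry_def)
qed

lemma pairing_column_None: "pairing h (column None) = coeff h 3"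
  by (simp add: pairing_def column_def pc_entry_def if_distrib[of "(*) _"] cong: if_cong)

lemma pairing_eq: "pairing h y = coeff h 0 * y 0 + coeff h 1 * y 1 + coeff h 2 * y 2 + coeff h 3 * y 3"
  by (simp add: pairing_def eval_nat_numeral ac_simps)

lemma degree_root_factor: "degree (root_factor p) = (if p = None then 0 else 1)"
  by (simp add: root_factor_def split: option.split)

lemma lead_coeff_root_factor: "lead_coeff (root_factor p) = 1"
  by (simp add: root_factor_def split: option.split)

lemma poly_root_factor_eq_0_iff: "poly (root_factor p) t = 0 \<longleftrightarrow> p = Some t"
  by (cases p) (auto simp: root_factor_def)

lemma degree_annihilator:
  fixes x y z :: "'a::idom option"
  shows "degree (annihilator x y z) = degree (root_factor x) + degree (root_factor y) + degree (root_factor z)"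
  unfolding annihilator_def using lead_coeff_root_factor
  by (metis degree_mult_eq leading_coeff_0_iff mult_eq_0_iff zero_neq_one)

lemma lead_coeff_annihilator:
  fixes x y z :: "'a::idom option"
  shows "lead_coeff (annihilator x y z) = 1"
  by (simp add: annihilator_def lead_coeff_mult lead_coeff_root_factor)

lemma pairing_annihilator_column_eq_0_iff:
  fixes x y z :: "'a::field option"
  shows "pairing (annihilator x y z) (column p) = 0 \<longleftrightarrow> p \<in> {x,y,z}"
proof (cases p)
  case None
  have "coeff (annihilator x y z) 3 = (if None \<in> {x,y,z} then 0 else 1)"
  proof (cases "None \<in> {x,y,z}")
    case True
    then have "degree (annihilator x y z) < 3"
      by (auto simp: degree_annihilator degree_root_factor)
    then show ?thesis
      using True by (simp add: coeff_eq_0)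
  next
    case False
    then obtain a b c where "x = Some a" "y = Some b" "z = Some c"
      by (cases x; cases y; cases z) auto
    then have "degree (annihilator x y z) = 3"
      by (simp add: degree_annihilator degree_root_factor)
    then show ?thesis
      using False lead_coeff_annihilator[of x y z] by simp
  qed
  then show ?thesis
    by (simp add: None pairing_column_None)
next
  case (Some t)
  have "degree (annihilator x y z) \<le> 3"
    by (simp add: degree_annihilator degree_root_factor)
  then show ?thesis
    by (auto simp: Some pairing_column_Some annihilator_def poly_root_factor_eq_0_iff)
qed

lemma annihilator_None_middle: "annihilator (Some a) None z = annihilator None (Some a) z"
  by (simp add: annihilator_def ac_simps)

lemma annihilator_None_right: "annihilator x (Some b) None = annihilator None x (Some b)"
  by (simp add: annihilator_def ac_simps)

lemma pairing_annihilator_Some3: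
  "pairing (annihilator (Some a) (Some b) (Some c)) y
     = y 3 - (a + b + c) * y 2 + (a * b + a * c + b * c) * y 1 - a * b * c * y 0"
  by (simp add: pairing_eq annihilator_def root_factor_def eval_nat_numeral algebra_simps)

lemma pairing_annihilator_None_Some2:
  "pairing (annihilator None (Some a) (Some b)) y = y 2 - (a + b) * y 1 + a * b * y 0"
  by (simp add: pairing_eq annihilator_def root_factor_def eval_nat_numeral algebra_simps)

lemma pairing_annihilator_None2_Some: "pairing (annihilator None None (Some a)) y = y 1 - a * y 0"
  by (simp add: pairing_eq annihilator_def root_factor_def eval_nat_numeral algebra_simps)

lemma pairing_annihilator_None3: "pairing (annihilator None None None) y = y 0"
  by (simp add: pairing_eq annihilator_def root_factor_def)

lemma less_4_iff: "(i::nat) < 4 \<longleftrightarrow> i = 0 \<or> i = 1 \<or> i = 2 \<or> i = 3"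
  by auto

lemma pairing_cong: "(\<And>i. i < 4 \<Longrightarrow> y i = y' i) \<Longrightarrow> pairing h y = pairing h y'"
  by (simp add: pairing_def)

lemma pairing_annihilator_syndrome:
  assumes "supp w \<subseteq> insert p {x,y,z}" "p \<notin> {x,y,z}"
  shows "pairing (annihilator x y z) (syndrome w) = w p * pairing (annihilator x y z) (column p)"
proof -
  have "w p' * pairing (annihilator x y z) (column p') = 0" if "p' \<noteq> p" for p'
    using assms that pairing_annihilator_column_eq_0_iff[of x y z p'] by (auto simp: supp_def)
  then show ?thesis
    by (simp add: pairing_syndrome sum.remove[of UNIV p] sum.neutral)
qed

lemma subset_triple:
  fixes A :: "'a option set"
  assumes "finite A" "card A \<le> 3" "p \<notin> A"
  obtains x y z where "A \<subseteq> {x,y,z}" "p \<notin> {x,y,z}"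
proof -
  consider "A = {}" | a where "A = {a}" | a b where "A = {a,b}" | a b c where "A = {a,b,c}"
  proof -
    have "card A = 0 \<or> card A = 1 \<or> card A = 2 \<or> card A = 3"
      using assms(2) by linarith
    then show thesis
      using that assms(1) by (auto simp: card_1_singleton_iff card_2_iff card_3_iff)
  qed
  then show ?thesis
  proof cases
    case 1
    have "p \<noteq> (if p = None then Some undefined else None)"
      by simp
    then show ?thesis
      using that[of "if p = None then Some undefined else None" _ _] 1 by blast
  qed (use that assms(3) in blast)+
qed

lemma syndrome_eq_0_imp_eq_0:
  fixes w :: "'a::{field,finite} option \<Rightarrow> 'a"
  assumes "card (supp w) \<le> 4" "\<forall>i<4. syndrome w i = 0"
  shows "w = (\<lambda>_. 0)"
proof
  fix p
  show "w p = 0"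
  proof (rule ccontr)
    assume "w p \<noteq> 0"
    then have "card (supp w - {p}) \<le> 3"
      using assms(1) by (simp add: supp_def)
    then obtain x y z where xyz: "supp w - {p} \<subseteq> {x,y,z}" "p \<notin> {x,y,z}"
      by (metis subset_triple finite Diff_iff singletonI)
    have "w p * pairing (annihilator x y z) (column p) = pairing (annihilator x y z) (syndrome w)"
      using xyz by (intro pairing_annihilator_syndrome[symmetric]) auto
    also have "\<dots> = 0"
      using assms(2) by (simp add: pairing_def)
    finally show False
      using \<open>w p \<noteq> 0\<close> xyz(2) pairing_annihilator_column_eq_0_iff by auto
  qed
qed

lemma syndrome_surj_on_four_points:
  fixes x y z u :: "'a::{field,finite} option"
  assumes "distinct [x,y,z,u]"
  shows "\<exists>w. supp w \<subseteq> {x,y,z,u} \<and> (\<forall>i<4. syndrome w i = s i)"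
proof -
  define vec where "vec = (\<lambda>(a::'a, b, c, d) p. if p = x then a else if p = y then b
      else if p = z then c else if p = u then d else 0)"
  define \<Phi> where "\<Phi> t = (syndrome (vec t) 0, syndrome (vec t) 1, syndrome (vec t) 2, syndrome (vec t) 3)" for t
  have supp_vec: "supp (vec t) \<subseteq> {x,y,z,u}" for t
    unfolding vec_def supp_def by (auto split: prod.splits)
  have "inj \<Phi>"
  proof
    fix t1 t2 assume "\<Phi> t1 = \<Phi> t2"
    then have "\<forall>i<4. syndrome (\<lambda>p. vec t1 p - vec t2 p) i = 0"
      unfolding \<Phi>_def less_4_iff by (auto simp: syndrome_diff)
    moreover have "card (supp (\<lambda>p. vec t1 p - vec t2 p)) \<le> 4"
    proof -
      have "supp (\<lambda>p. vec t1 p - vec t2 p) \<subseteq> {x,y,z,u}"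
        using supp_diff[of "vec t1" "vec t2"] supp_vec[of t1] supp_vec[of t2] by blast
      then have "card (supp (\<lambda>p. vec t1 p - vec t2 p)) \<le> card {x,y,z,u}"
        by (rule card_mono[rotated]) simp
      also have "\<dots> = 4"
        using assms by simp
      finally show ?thesis .
    qed
    ultimately have "(\<lambda>p. vec t1 p - vec t2 p) = (\<lambda>_. 0)"
      by (intro syndrome_eq_0_imp_eq_0)
    then have "\<And>p. vec t1 p = vec t2 p"
      by (simp add: fun_eq_iff)
    from this[of x] this[of y] this[of z] this[of u] assms show "t1 = t2"
      unfolding vec_def by (auto split: prod.splits)
  qed
  then have "surj \<Phi>"
    by (simp add: finite_UNIV_inj_surj)
  then obtain t where "\<Phi> t = (s 0, s 1, s 2, s 3)"
    by (metis surjD)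
  then have "\<forall>i<4. syndrome (vec t) i = s i"
    unfolding \<Phi>_def less_4_iff by auto
  then show ?thesis
    using supp_vec by blast
qed

locale weight3_coset =
  fixes v :: "'a::{field,finite} option \<Rightarrow> 'a"
  assumes card_ge_3: "3 \<le> card (UNIV :: 'a set)"
    and coset_weight_3: "coset_weight (coset_of v) = 3"
begin

abbreviation "s \<equiv> syndrome v"
abbreviation "V \<equiv> coset_of v"

lemma mem_V: "x \<in> V \<longleftrightarrow> (\<forall>i<4. syndrome x i = s i)"
  by (simp add: coset_of_eq)

lemma hweight_ge_3: "x \<in> V \<Longrightarrow> 3 \<le> hweight x"
  using coset_weight_3 unfolding coset_weight_def by (metis Min_le finite finite_imageI imageI)

lemma syndrome_not_two_columns: "\<not> (\<forall>i<4. s i = \<alpha> * column x i + \<beta> * column y i)"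
proof
  assume s: "\<forall>i<4. s i = \<alpha> * column x i + \<beta> * column y i"
  define w where "w p = (if p = x then \<alpha> else 0) + (if p = y then \<beta> else 0)" for p
  have "syndrome w i = \<alpha> * column x i + \<beta> * column y i" for i
    by (simp add: syndrome_def w_def distrib_right sum.distrib if_distrib[where f = "\<lambda>a. a * _"] cong: if_cong)
  then have "w \<in> V"
    using s by (simp add: mem_V)
  moreover have "hweight w \<le> 2"
  proof -
    have "supp w \<subseteq> {x,y}"
      by (auto simp: w_def supp_def)
    then have "card (supp w) \<le> card {x,y}"
      by (rule card_mono[rotated]) simp
    also have "\<dots> \<le> 2"
      by (simp add: card_insert_if)
    finally show ?thesis
      by (simp add: hweight_eq_card_supp)
  qed
  ultimately show False
    using hweight_ge_3 by fastforce
qed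

lemma supported_in_triple_iff:
  assumes "distinct [x,y,z]"
  shows "(\<exists>w\<in>V. supp w \<subseteq> {x,y,z}) \<longleftrightarrow> pairing (annihilator x y z) s = 0"
proof
  assume "\<exists>w\<in>V. supp w \<subseteq> {x,y,z}"
  then obtain w where w: "w \<in> V" "supp w \<subseteq> {x,y,z}"
    by blast
  have "pairing (annihilator x y z) s = pairing (annihilator x y z) (syndrome w)"
    using w(1) by (intro pairing_cong) (simp add: mem_V)
  also have "\<dots> = 0"
    using w(2) pairing_annihilator_column_eq_0_iff[of x y z]
    by (auto simp: pairing_syndrome supp_def intro!: sum.neutral)
  finally show "pairing (annihilator x y z) s = 0" .
next
  assume pairing_0: "pairing (annihilator x y z) s = 0"
  have "card {x,y,z} \<le> 3"
    by (auto simp: card_insert_if)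
  then have "card {x,y,z} < card (UNIV :: 'a option set)"
    using card_ge_3 by simp
  then obtain u where u: "u \<notin> {x,y,z}"
    by (metis UNIV_I card_seteq finite less_le subsetI)
  then obtain w where w: "supp w \<subseteq> {x,y,z,u}" "\<forall>i<4. syndrome w i = s i"
    using syndrome_surj_on_four_points[of x y z u s] assms by auto
  have "w u * pairing (annihilator x y z) (column u) = pairing (annihilator x y z) (syndrome w)"
    using w(1) u by (intro pairing_annihilator_syndrome[symmetric]) auto
  also have "\<dots> = 0"
    using pairing_0 w(2) pairing_cong[of "syndrome w" s] by simp
  finally have "w u = 0"
    using u pairing_annihilator_column_eq_0_iff by auto
  then have "supp w \<subseteq> {x,y,z}"
    using w(1) by (auto simp: supp_def)
  then show "\<exists>w\<in>V. supp w \<subseteq> {x,y,z}"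
    using w(2) by (auto simp: mem_V)
qed

lemma V_eq_if_supp_subset:
  assumes "w1 \<in> V" "w2 \<in> V" "supp w1 \<subseteq> T" "supp w2 \<subseteq> T" "card T \<le> 4"
  shows "w1 = w2"
proof -
  have "card (supp (\<lambda>p. w1 p - w2 p)) \<le> card T"
    using supp_diff[of w1 w2] assms(3,4) by (intro card_mono) auto
  moreover have "\<forall>i<4. syndrome (\<lambda>p. w1 p - w2 p) i = 0"
    using assms(1,2) by (simp add: syndrome_diff mem_V)
  ultimately have "(\<lambda>p. w1 p - w2 p) = (\<lambda>_. 0)"
    using assms(5) by (intro syndrome_eq_0_imp_eq_0) auto
  then show ?thesis
    by (simp add: fun_eq_iff)
qed

definition weight3_supports :: "'a option set set" where
  "weight3_supports = {T. card T = 3 \<and> (\<exists>w\<in>V. supp w \<subseteq> T)}"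

lemma B_count_3_eq_card_weight3_supports: "B_count 3 V = card weight3_supports"
proof -
  have "bij_betw supp {x\<in>V. hweight x = 3} weight3_supports"
  proof (rule bij_betw_imageI)
    show "inj_on supp {x\<in>V. hweight x = 3}"
      by (rule inj_onI) (auto intro: V_eq_if_supp_subset simp: hweight_eq_card_supp)
    show "supp ` {x\<in>V. hweight x = 3} = weight3_supports"
    proof
      show "supp ` {x\<in>V. hweight x = 3} \<subseteq> weight3_supports"
        by (auto simp: weight3_supports_def hweight_eq_card_supp)
      show "weight3_supports \<subseteq> supp ` {x\<in>V. hweight x = 3}"
      proof
        fix T assume "T \<in> weight3_supports"
        then obtain w where w: "w \<in> V" "supp w \<subseteq> T" "card T = 3"
          by (auto simp: weight3_supports_def)
        then have "supp w = T"
          using hweight_ge_3[OF w(1)] by (metis card_seteq finite hweight_eq_card_supp)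
        then show "T \<in> supp ` {x\<in>V. hweight x = 3}"
          using w by (auto simp: hweight_eq_card_supp)
      qed
    qed
  qed
  then show ?thesis
    unfolding B_count_def by (rule bij_betw_same_card)
qed

lemma weight3_supports_eq:
  assumes crit: "\<And>x y z. distinct [x,y,z] \<Longrightarrow>
      pairing (annihilator x y z) s = 0 \<longleftrightarrow> x \<in> X \<and> y \<in> X \<and> z \<in> X \<and> R x y z"
  shows "weight3_supports = {T. T \<subseteq> X \<and> card T = 3 \<and> (\<exists>x y z. T = {x,y,z} \<and> R x y z)}"
proof (intro set_eqI iffI)
  fix T assume "T \<in> weight3_supports"
  then have T: "card T = 3" "\<exists>w\<in>V. supp w \<subseteq> T"
    by (auto simp: weight3_supports_def)
  then obtain x y z where xyz: "T = {x,y,z}" "distinct [x,y,z]"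
    by (auto simp: card_3_iff)
  then have "x \<in> X \<and> y \<in> X \<and> z \<in> X \<and> R x y z"
    using crit supported_in_triple_iff T(2) by blast
  then show "T \<in> {T. T \<subseteq> X \<and> card T = 3 \<and> (\<exists>x y z. T = {x,y,z} \<and> R x y z)}"
    using xyz T by auto
next
  fix T assume "T \<in> {T. T \<subseteq> X \<and> card T = 3 \<and> (\<exists>x y z. T = {x,y,z} \<and> R x y z)}"
  then obtain x y z where T: "T \<subseteq> X" "card T = 3" "T = {x,y,z}" "R x y z"
    by blast
  then have "distinct [x,y,z]"
    by (auto simp: card_insert_if split: if_splits)
  then show "T \<in> weight3_supports"
    using crit supported_in_triple_iff T by (auto simp: weight3_supports_def)
qed

end

definition count_supp_subset :: "('b \<Rightarrow> 'a::zero) set \<Rightarrow> 'b set \<Rightarrow> nat" where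
  "count_supp_subset X T = card {x\<in>X. supp x \<subseteq> T}"

definition count_supp_eq :: "('b \<Rightarrow> 'a::zero) set \<Rightarrow> 'b set \<Rightarrow> nat" where
  "count_supp_eq X S = card {x\<in>X. supp x = S}"

context
  fixes X :: "('b::finite \<Rightarrow> 'a::{zero,finite}) set"
begin

lemma count_supp_subset_eq_sum: "count_supp_subset X T = (\<Sum>U\<in>Pow T. count_supp_eq X U)"
proof -
  have "count_supp_subset X T = (\<Sum>U\<in>Pow T. card {x\<in>{x\<in>X. supp x \<subseteq> T}. supp x = U})"
    unfolding count_supp_subset_def by (rule card_eq_sum_card_fibres) auto
  also have "\<dots> = (\<Sum>U\<in>Pow T. count_supp_eq X U)"
    unfolding count_supp_eq_def by (intro sum.cong refl arg_cong[where f = card]) auto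
  finally show ?thesis .
qed

lemma count_supp_eq_mobius:
  "int (count_supp_eq X S) = (\<Sum>T\<in>Pow S. (-1) ^ (card S - card T) * int (count_supp_subset X T))"
  by (rule inclusion_exclusion_mobius) (simp_all add: count_supp_subset_eq_sum)

lemma B_count_eq_sum_count_supp_eq: "B_count w X = (\<Sum>S\<in>{S. card S = w}. count_supp_eq X S)"
proof -
  have "B_count w X = (\<Sum>S\<in>{S. card S = w}. card {x\<in>{x\<in>X. hweight x = w}. supp x = S})"
    unfolding B_count_def by (rule card_eq_sum_card_fibres) (auto simp: hweight_eq_card_supp)
  also have "\<dots> = (\<Sum>S\<in>{S. card S = w}. count_supp_eq X S)"
    unfolding count_supp_eq_def
    by (intro sum.cong refl arg_cong[where f = card]) (auto simp: hweight_eq_card_supp)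
  finally show ?thesis .
qed

end

lemma count_supp_subset_arc_code:
  assumes "card T \<le> 4"
  shows "count_supp_subset arc_code T = 1"
proof -
  have "{c\<in>arc_code. supp c \<subseteq> T} = {\<lambda>_. 0}"
  proof
    show "{c\<in>arc_code. supp c \<subseteq> T} \<subseteq> {\<lambda>_. 0}"
    proof
      fix c assume c: "c \<in> {c\<in>arc_code. supp c \<subseteq> T}"
      then have "card (supp c) \<le> 4"
        using assms card_mono[of T "supp c"] by auto
      then show "c \<in> {\<lambda>_. 0}"
        using c syndrome_eq_0_imp_eq_0[of c] by (auto simp: arc_code_eq)
    qed
    show "{\<lambda>_. 0} \<subseteq> {c\<in>arc_code. supp c \<subseteq> T}"
      by (auto simp: arc_code_eq syndrome_def supp_def)
  qed
  then show ?thesis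
    by (simp add: count_supp_subset_def)
qed

lemma A_count_4_arc_code: "A_count 4 (arc_code :: ('a::{field,finite} option \<Rightarrow> 'a) set) = 0"
proof -
  have "c = (\<lambda>_. 0)" if "c \<in> arc_code" "hweight c = 4" for c :: "'a option \<Rightarrow> 'a"
    using that syndrome_eq_0_imp_eq_0[of c] by (simp add: hweight_eq_card_supp arc_code_eq)
  then show ?thesis
    by (fastforce simp: A_count_def hweight_eq_card_supp supp_def)
qed

context weight3_coset
begin

lemma count_supp_subset_V_large:
  assumes "4 \<le> card T"
  shows "count_supp_subset V T = count_supp_subset arc_code T"
proof -
  obtain B where B: "B \<subseteq> T" "card B = 4"
    using obtain_subset_with_card_n[OF assms] by blast
  then have "card B = Suc 3"
    by simp
  then obtain x B' where "B = insert x B'" "x \<notin> B'" "card B' = 3"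
    using card_Suc_eq[THEN iffD1] by blast
  then obtain x y z u where "B = {x,y,z,u}" "distinct [x,y,z,u]"
    by (auto simp: card_3_iff)
  then obtain w0 where supp_w0: "supp w0 \<subseteq> B" and syndrome_w0: "\<forall>i<4. syndrome w0 i = s i"
    using syndrome_surj_on_four_points[of x y z u s] by metis
  have supp_w0: "supp w0 \<subseteq> T"
    using supp_w0 B(1) by (rule order_trans)
  have to_code: "(\<lambda>p. x p - w0 p) \<in> {c\<in>arc_code. supp c \<subseteq> T}" if "x \<in> V" "supp x \<subseteq> T" for x
  proof -
    have "supp (\<lambda>p. x p - w0 p) \<subseteq> T"
      using that(2) supp_w0 supp_diff[of x w0] by blast
    moreover have "(\<lambda>p. x p - w0 p) \<in> arc_code"
      using that(1) syndrome_w0 by (simp add: arc_code_eq mem_V syndrome_diff)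
    ultimately show ?thesis
      by simp
  qed
  have to_coset: "(\<lambda>p. c p + w0 p) \<in> {x\<in>V. supp x \<subseteq> T}" if "c \<in> arc_code" "supp c \<subseteq> T" for c
  proof -
    have "supp (\<lambda>p. c p + w0 p) \<subseteq> T"
      using that(2) supp_w0 supp_add[of c w0] by blast
    moreover have "(\<lambda>p. c p + w0 p) \<in> V"
      using that(1) syndrome_w0 by (simp add: arc_code_eq mem_V syndrome_add)
    ultimately show ?thesis
      by simp
  qed
  have "bij_betw (\<lambda>x p. x p - w0 p) {x\<in>V. supp x \<subseteq> T} {c\<in>arc_code. supp c \<subseteq> T}"
    by (rule bij_betw_byWitness[where f' = "\<lambda>c p. c p + w0 p"]) (use to_code to_coset in auto)
  then show ?thesis
    unfolding count_supp_subset_def by (rule bij_betw_same_card)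
qed

lemma count_supp_subset_V_small:
  assumes "card T \<le> 3"
  shows "count_supp_subset V T = (if T \<in> weight3_supports then 1 else 0)"
proof (cases "T \<in> weight3_supports")
  case True
  then obtain w where w: "w \<in> V" "supp w \<subseteq> T"
    by (auto simp: weight3_supports_def)
  have "{x\<in>V. supp x \<subseteq> T} = {w}"
    using w assms by (auto intro: V_eq_if_supp_subset)
  then show ?thesis
    using True by (simp add: count_supp_subset_def)
next
  case False
  have "{x\<in>V. supp x \<subseteq> T} = {}"
  proof (rule ccontr)
    assume "{x\<in>V. supp x \<subseteq> T} \<noteq> {}"
    then obtain x where x: "x \<in> V" "supp x \<subseteq> T"
      by blast
    then have "3 \<le> card T"
      using hweight_ge_3[OF x(1)] card_mono[of T "supp x"] by (simp add: hweight_eq_card_supp)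
    then show False
      using False x assms by (auto simp: weight3_supports_def)
  qed
  then show ?thesis
    using False by (simp add: count_supp_subset_def)
qed

lemma count_supp_subset_V_diff:
  "int (count_supp_subset V T) - int (count_supp_subset arc_code T)
     = of_bool (T \<in> weight3_supports) - of_bool (card T \<le> 3)"
proof (cases "card T \<le> 3")
  case True
  then show ?thesis
    by (simp add: count_supp_subset_V_small count_supp_subset_arc_code)
next
  case False
  then have "T \<notin> weight3_supports"
    by (auto simp: weight3_supports_def)
  then show ?thesis
    using False by (simp add: count_supp_subset_V_large)
qed

end

lemma sum_card_contained:
  fixes W :: "'a::finite set set"
  assumes "\<And>T. T \<in> W \<Longrightarrow> card T = k" "k \<le> w"
  shows "(\<Sum>S\<in>{S. card S = w}. card {T\<in>W. T \<subseteq> S}) = card W * ((CARD('a) - k) choose (w - k))"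
proof -
  have "(\<Sum>S\<in>{S. card S = w}. card {T\<in>W. T \<subseteq> S}) = (\<Sum>S\<in>{S. card S = w}. \<Sum>T\<in>W. of_bool (T \<subseteq> S))"
    by (simp add: Int_def)
  also have "\<dots> = (\<Sum>T\<in>W. \<Sum>S\<in>{S. card S = w}. of_bool (T \<subseteq> S))"
    by (rule sum.swap)
  also have "\<dots> = (\<Sum>T\<in>W. card {S. card S = w \<and> T \<subseteq> S})"
    by (simp add: Collect_conj_eq Int_commute)
  also have "\<dots> = (\<Sum>T\<in>W. (CARD('a) - k) choose (w - k))"
    using assms by (intro sum.cong refl) (simp add: card_supersets)
  finally show ?thesis
    by simp
qed

context weight3_coset
begin

lemma count_supp_eq_V_diff:
  assumes "card S = w" "4 \<le> w"
  shows "int (count_supp_eq V S) - int (count_supp_eq arc_code S)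
     = (-1) ^ (w - 3) * (int (card {T\<in>weight3_supports. T \<subseteq> S}) - int ((w - 1) choose 3))"
proof -
  have supports: "(\<Sum>T\<in>Pow S. (-1) ^ (w - card T) * of_bool (T \<in> weight3_supports))
      = (-1) ^ (w - 3) * int (card {T\<in>weight3_supports. T \<subseteq> S})"
  proof -
    have "(\<Sum>T\<in>Pow S. (-1) ^ (w - card T) * of_bool (T \<in> weight3_supports))
        = (\<Sum>T\<in>Pow S. (-1) ^ (w - 3) * of_bool (T \<in> weight3_supports) :: int)"
      by (intro sum.cong refl) (auto simp: weight3_supports_def)
    also have "{T\<in>weight3_supports. T \<subseteq> S} = Pow S \<inter> weight3_supports"
      by blast
    ultimately show ?thesis
      by simp
  qed
  have small: "(\<Sum>T\<in>Pow S. (-1) ^ (w - card T) * of_bool (card T \<le> 3))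
      = (-1) ^ (w - 3) * int ((w - 1) choose 3)"
  proof -
    have "(\<Sum>T\<in>Pow S. (-1) ^ (w - card T) * of_bool (card T \<le> 3))
        = (\<Sum>k\<le>w. of_nat (w choose k) * ((-1) ^ (w - k) * of_bool (k \<le> 3)) :: int)"
      using sum_Pow_card[of S "\<lambda>k. (-1) ^ (w - k) * of_bool (k \<le> 3)"] assms(1) by simp
    also have "\<dots> = (\<Sum>k\<le>3. (-1) ^ (w - k) * of_nat (w choose k))"
      using assms(2) by (intro sum.mono_neutral_cong_right) auto
    also have "\<dots> = (-1) ^ (w - 3) * int ((w - 1) choose 3)"
      using assms(2) by (simp add: alternating_partial_sum_binomial)
    finally show ?thesis .
  qed
  have "int (count_supp_eq V S) - int (count_supp_eq arc_code S)
      = (\<Sum>T\<in>Pow S. (-1) ^ (w - card T) * (of_bool (T \<in> weight3_supports) - of_bool (card T \<le> 3)))"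
    by (simp add: count_supp_eq_mobius assms(1) flip: sum_subtractf right_diff_distrib count_supp_subset_V_diff)
  also have "\<dots> = (\<Sum>T\<in>Pow S. (-1) ^ (w - card T) * of_bool (T \<in> weight3_supports))
      - (\<Sum>T\<in>Pow S. (-1) ^ (w - card T) * of_bool (card T \<le> 3))"
    by (simp add: right_diff_distrib sum_subtractf)
  finally show ?thesis
    by (simp add: supports small right_diff_distrib)
qed

lemma B_count_V:
  assumes "4 \<le> w"
  shows "int (B_count w V) = int (A_count w (arc_code :: ('a option \<Rightarrow> 'a) set))
     + (-1) ^ w * (int ((CARD('a) + 1) choose w) * int ((w - 1) choose 3)
                   - int ((CARD('a) - 2) choose (w - 3)) * int (B_count 3 V))"
proof -
  let ?W = "{S :: 'a option set. card S = w}"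
  have sign: "(-1::int) ^ (w - 3) = - ((-1) ^ w)"
    using assms by (simp add: neg_one_power_add_eq_neg_one_power_diff[symmetric] power_add)
  have card_W: "card ?W = (CARD('a) + 1) choose w"
    using n_subsets[of "UNIV :: 'a option set" w] by simp
  have "int (B_count w V) - int (A_count w (arc_code :: ('a option \<Rightarrow> 'a) set))
      = (\<Sum>S\<in>?W. int (count_supp_eq V S) - int (count_supp_eq arc_code S))"
    by (simp add: B_count_eq_sum_count_supp_eq A_count_def flip: B_count_def sum_subtractf)
  also have "\<dots> = (-1) ^ (w - 3) * (\<Sum>S\<in>?W. int (card {T\<in>weight3_supports. T \<subseteq> S}) - int ((w - 1) choose 3))"
    using assms by (simp add: count_supp_eq_V_diff sum_distrib_left)
  also have "\<dots> = (-1) ^ (w - 3) * (int (card weight3_supports) * int ((CARD('a) - 2) choose (w - 3))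
      - int ((CARD('a) + 1) choose w) * int ((w - 1) choose 3))"
    using assms sum_card_contained[of weight3_supports 3 w]
    by (simp add: sum_subtractf card_W weight3_supports_def flip: of_nat_sum)
  finally show ?thesis
    by (simp add: sign B_count_3_eq_card_weight3_supports algebra_simps)
qed

end

lemma card_Some_roots_le:
  fixes P :: "'a::idom poly"
  assumes "P \<noteq> 0" "degree P \<le> n"
  shows "card (Some ` {t. poly P t = 0}) \<le> n"
  using card_image_le[of "{t. poly P t = 0}" Some] card_poly_roots_bound[OF assms(1)] assms(2)
  by (simp add: poly_roots_finite[OF assms(1)])

context weight3_coset
begin

lemma B_count_3_via_relation:
  assumes "symmetric_ternary_relation X R"
    and "\<And>x y z. distinct [x,y,z] \<Longrightarrow>
      pairing (annihilator x y z) s = 0 \<longleftrightarrow> x \<in> X \<and> y \<in> X \<and> z \<in> X \<and> R x y z"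
  shows "6 * B_count 3 V + 3 * card X = card X * card X + 2 * card {x\<in>X. R x x x}"
  using symmetric_ternary_relation.card_3_sets[OF assms(1)] weight3_supports_eq[OF assms(2)]
  by (simp add: B_count_3_eq_card_weight3_supports)

definition sum_rel :: "'a option \<Rightarrow> 'a option \<Rightarrow> 'a option \<Rightarrow> bool" where
  "sum_rel x y z \<longleftrightarrow> s 3 = (the x + the y + the z) * s 2"

context
  assumes s0: "s 0 = 0" and s1: "s 1 = 0"
begin

lemma s2_nonzero: "s 2 \<noteq> 0"
proof
  assume "s 2 = 0"
  then have "\<forall>i<4. s i = s 3 * column None i + 0 * column None i"
    using s0 s1 by (auto simp: column_def pc_entry_def less_4_iff)
  then show False
    using syndrome_not_two_columns by blast
qed

lemma pairing_annihilator_eq_0_iff_sum_rel: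
  assumes "distinct [x,y,z]"
  shows "pairing (annihilator x y z) s = 0
    \<longleftrightarrow> x \<in> range Some \<and> y \<in> range Some \<and> z \<in> range Some \<and> sum_rel x y z"
proof (cases "None \<in> {x,y,z}")
  case True
  then obtain a b where "annihilator x y z = annihilator None (Some a) (Some b)"
    using assms by (cases x; cases y; cases z) (auto simp: annihilator_None_middle annihilator_None_right)
  then have "pairing (annihilator x y z) s = s 2"
    using s0 s1 by (simp add: pairing_annihilator_None_Some2)
  then show ?thesis
    using s2_nonzero True by auto
next
  case False
  then obtain a b c where "x = Some a" "y = Some b" "z = Some c"
    by (cases x; cases y; cases z) auto
  then show ?thesis
    using s0 s1 by (auto simp: sum_rel_def pairing_annihilator_Some3 right_minus_eq)
qed

lemma sum_rel_unique:
  assumes "x \<in> range Some" "y \<in> range Some"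
  shows "\<exists>!z. z \<in> range Some \<and> sum_rel x y z"
proof -
  obtain a b where ab: "x = Some a" "y = Some b"
    using assms by auto
  have "z \<in> range Some \<and> sum_rel x y z \<longleftrightarrow> z = Some (s 3 / s 2 - a - b)" for z
    using s2_nonzero by (cases z) (auto simp: sum_rel_def ab field_simps)
  then show ?thesis
    by simp
qed

lemma card_sum_rel_diagonal:
  "card {x\<in>range Some. sum_rel x x x} \<le> 1 \<or> {x\<in>range Some. sum_rel x x x} = range Some"
proof -
  have diagonal: "sum_rel (Some t) (Some t) (Some t) \<longleftrightarrow> 3 * t * s 2 = s 3" for t
    by (auto simp: sum_rel_def algebra_simps)
  show ?thesis
  proof (cases "(3::'a) = 0")
    case False
    have "t = s 3 / (3 * s 2)" if "3 * t * s 2 = s 3" for t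
      using that False s2_nonzero by (simp add: eq_divide_eq ac_simps)
    then have "{x\<in>range Some. sum_rel x x x} \<subseteq> {Some (s 3 / (3 * s 2))}"
      by (auto simp: diagonal)
    then show ?thesis
      using card_mono[of "{Some (s 3 / (3 * s 2))}"] by fastforce
  next
    case True
    then have "{x\<in>range Some. sum_rel x x x} = (if s 3 = 0 then range Some else {})"
      by (auto simp: diagonal)
    then show ?thesis
      by simp
  qed
qed

lemma B_count_3_equation_s01:
  "\<exists>e. 6 * B_count 3 V + 3 * CARD('a) = CARD('a) * CARD('a) + 2 * e \<and> (e \<le> 1 \<or> e = CARD('a))"
proof -
  let ?X = "range Some :: 'a option set"
  have "symmetric_ternary_relation ?X sum_rel"
    using sum_rel_unique by unfold_locales (auto simp: sum_rel_def ac_simps)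
  then have "6 * B_count 3 V + 3 * card ?X = card ?X * card ?X + 2 * card {x\<in>?X. sum_rel x x x}"
    using pairing_annihilator_eq_0_iff_sum_rel by (rule B_count_3_via_relation)
  moreover have "card ?X = CARD('a)"
    by (simp add: card_image)
  ultimately show ?thesis
    using card_sum_rel_diagonal by (intro exI[of _ "card {x\<in>?X. sum_rel x x x}"]) auto
qed

end

end

locale recurrent_weight3_coset = weight3_coset v for v :: "'a::{field,finite} option \<Rightarrow> 'a" +
  fixes p r :: 'a
  assumes recurrence2: "s 2 = p * s 1 + r * s 0"
    and recurrence3: "s 3 = p * s 2 + r * s 1"
    and initial_nonzero: "s 0 \<noteq> 0 \<or> s 1 \<noteq> 0"
begin

definition qmult :: "'a \<times> 'a \<Rightarrow> 'a \<times> 'a \<Rightarrow> 'a \<times> 'a" (infixl \<open>\<otimes>\<close> 70) where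
  "u \<otimes> w = (fst u * fst w + r * snd u * snd w, fst u * snd w + snd u * fst w + p * snd u * snd w)"

definition qnorm :: "'a \<times> 'a \<Rightarrow> 'a" where
  "qnorm u = fst u * fst u + p * fst u * snd u - r * snd u * snd u"

definition point :: "'a option \<Rightarrow> 'a \<times> 'a" where
  "point x = (case x of Some t \<Rightarrow> (-t, 1) | None \<Rightarrow> (1, 0))"

definition functional :: "'a \<times> 'a \<Rightarrow> 'a" where
  "functional u = fst u * s 0 + snd u * s 1"

definition char_poly :: "'a \<Rightarrow> 'a" where
  "char_poly t = t * t - p * t - r"

lemma qmult_commute: "u \<otimes> w = w \<otimes> u"
  by (simp add: qmult_def algebra_simps)

lemma qmult_assoc: "u \<otimes> w \<otimes> z = u \<otimes> (w \<otimes> z)"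
  by (simp add: qmult_def algebra_simps)

lemma qmult_left_commute: "u \<otimes> (w \<otimes> z) = w \<otimes> (u \<otimes> z)"
  by (simp add: qmult_def algebra_simps)

lemmas qmult_ac = qmult_assoc qmult_commute qmult_left_commute

lemma qnorm_qmult: "qnorm (u \<otimes> w) = qnorm u * qnorm w"
  by (simp add: qnorm_def qmult_def algebra_simps)

lemma qnorm_point: "qnorm (point (Some t)) = char_poly t" "qnorm (point None) = 1"
  by (simp_all add: qnorm_def point_def char_poly_def)

lemma pairing_annihilator_eq_functional:
  "pairing (annihilator x y z) s = functional (point x \<otimes> point y \<otimes> point z)"
  by (cases x; cases y; cases z)
    (simp_all add: annihilator_None_middle annihilator_None_right pairing_annihilator_Some3
      pairing_annihilator_None_Some2 pairing_annihilator_None2_Some pairing_annihilator_None3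
      recurrence2 recurrence3 qmult_def point_def functional_def algebra_simps)

lemma recurrent_two_roots_False:
  assumes "char_poly a = 0" "char_poly b = 0" "\<alpha> + \<beta> = s 0" "\<alpha> * a + \<beta> * b = s 1"
  shows False
proof -
  have root: "t ^ Suc (Suc i) = p * t ^ Suc i + r * t ^ i" if "char_poly t = 0" for t i
  proof -
    have "t ^ Suc (Suc i) = (t * t) * t ^ i"
      by (simp add: mult_ac)
    also have "t * t = p * t + r"
      using that by (simp add: char_poly_def algebra_simps)
    finally show ?thesis
      by (simp add: algebra_simps)
  qed
  define y where "y i = \<alpha> * column (Some a) i + \<beta> * column (Some b) i" for i
  have y_rec: "y (Suc (Suc i)) = p * y (Suc i) + r * y i" for i
    by (simp add: y_def column_def pc_entry_def root[OF assms(1)] root[OF assms(2)] algebra_simps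
        del: power_Suc)
  have "y 0 = s 0" "y 1 = s 1"
    using assms(3,4) by (simp_all add: y_def column_def pc_entry_def)
  moreover have "y 2 = p * y 1 + r * y 0" "y 3 = p * y 2 + r * y 1"
    using y_rec[of 0] y_rec[of 1] by (simp_all add: numeral_2_eq_2 numeral_3_eq_3)
  ultimately have "\<forall>i<4. s i = y i"
    by (auto simp: less_4_iff recurrence2 recurrence3)
  then show False
    using syndrome_not_two_columns by (auto simp: y_def)
qed

lemma char_poly_root_unique:
  assumes "char_poly a = 0" "char_poly b = 0"
  shows "a = b"
proof (rule ccontr)
  assume "a \<noteq> b"
  define \<beta> where "\<beta> = (a * s 0 - s 1) / (a - b)"
  have "\<beta> * (a - b) = a * s 0 - s 1"
    using \<open>a \<noteq> b\<close> by (simp add: \<beta>_def)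
  moreover have "(s 0 - \<beta>) * a + \<beta> * b = s 0 * a - \<beta> * (a - b)"
    by (simp add: algebra_simps)
  ultimately have "(s 0 - \<beta>) * a + \<beta> * b = s 1"
    by simp
  then show False
    using recurrent_two_roots_False[OF assms, of "s 0 - \<beta>" \<beta>] by simp
qed

lemma root_initial_nonzero: "char_poly a = 0 \<Longrightarrow> s 1 - a * s 0 \<noteq> 0"
  using recurrent_two_roots_False[of a a "s 0" 0] by auto

lemma functional_qmult_root_point:
  assumes "char_poly a = 0" "qnorm u \<noteq> 0"
  shows "functional (u \<otimes> point (Some a)) \<noteq> 0"
proof -
  have r: "r = a * a - p * a"
    using assms(1) by (simp add: char_poly_def algebra_simps)
  define c where "c = fst u + snd u * (p - a)"
  have "c * (fst u + snd u * a) = qnorm u"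
    unfolding qnorm_def c_def by (simp add: r algebra_simps)
  then have "c \<noteq> 0"
    using assms(2) by auto
  moreover have "functional (u \<otimes> point (Some a)) = c * (s 1 - a * s 0)"
    unfolding functional_def qmult_def point_def c_def by (simp add: r algebra_simps)
  ultimately show ?thesis
    using root_initial_nonzero[OF assms(1)] by simp
qed

definition unit_points :: "'a option set" where
  "unit_points = {x. qnorm (point x) \<noteq> 0}"

definition triple_rel :: "'a option \<Rightarrow> 'a option \<Rightarrow> 'a option \<Rightarrow> bool" where
  "triple_rel x y z \<longleftrightarrow> functional (point x \<otimes> point y \<otimes> point z) = 0"

lemma not_unit_point: "x \<notin> unit_points \<Longrightarrow> \<exists>a. x = Some a \<and> char_poly a = 0"
  by (cases x) (auto simp: unit_points_def qnorm_point)

lemma triple_rel_swap12: "triple_rel x y z \<longleftrightarrow> triple_rel y x z"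
  by (simp add: triple_rel_def qmult_commute)

lemma triple_rel_swap23: "triple_rel x y z \<longleftrightarrow> triple_rel x z y"
  by (simp add: triple_rel_def qmult_ac)

lemma triple_rel_imp_unit_point:
  assumes "distinct [x,y,z]" "triple_rel x y z"
  shows "x \<in> unit_points"
proof (rule ccontr)
  assume "x \<notin> unit_points"
  then obtain a where a: "x = Some a" "char_poly a = 0"
    using not_unit_point by blast
  have "y \<in> unit_points" "z \<in> unit_points"
    using assms(1) a not_unit_point char_poly_root_unique by fastforce+
  then have "qnorm (point y \<otimes> point z) \<noteq> 0"
    by (simp add: unit_points_def qnorm_qmult)
  then have "functional (point y \<otimes> point z \<otimes> point x) \<noteq> 0"
    using functional_qmult_root_point[OF a(2)] a(1) by simp
  then show False
    using assms(2) by (simp add: triple_rel_def qmult_ac)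
qed

lemma pairing_annihilator_eq_0_iff:
  assumes "distinct [x,y,z]"
  shows "pairing (annihilator x y z) s = 0
    \<longleftrightarrow> x \<in> unit_points \<and> y \<in> unit_points \<and> z \<in> unit_points \<and> triple_rel x y z"
proof -
  have "triple_rel x y z \<Longrightarrow> y \<in> unit_points" "triple_rel x y z \<Longrightarrow> z \<in> unit_points"
    using assms triple_rel_imp_unit_point[of y x z] triple_rel_imp_unit_point[of z x y]
    by (auto simp: triple_rel_swap12 triple_rel_swap23)
  then show ?thesis
    using triple_rel_imp_unit_point[OF assms]
    by (auto simp: triple_rel_def pairing_annihilator_eq_functional)
qed

lemma triple_rel_unique:
  assumes "x \<in> unit_points" "y \<in> unit_points"
  shows "\<exists>!z. z \<in> unit_points \<and> triple_rel x y z"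
proof -
  define u where "u = point x \<otimes> point y"
  define \<alpha> where "\<alpha> = functional u"
  define \<beta> where "\<beta> = functional (u \<otimes> (0, 1))"
  define z0 where "z0 = (if \<alpha> = 0 then None else Some (\<beta> / \<alpha>))"
  have u: "qnorm u \<noteq> 0"
    using assms by (simp add: u_def qnorm_qmult unit_points_def)
  have functional_Some: "functional (u \<otimes> point (Some t)) = \<beta> - t * \<alpha>" for t
    by (simp add: \<alpha>_def \<beta>_def functional_def qmult_def point_def algebra_simps)
  have functional_None: "functional (u \<otimes> point None) = \<alpha>"
    by (simp add: \<alpha>_def functional_def qmult_def point_def)
  have "\<alpha> \<noteq> 0 \<or> \<beta> \<noteq> 0"
  proof (rule ccontr)
    assume "\<not> (\<alpha> \<noteq> 0 \<or> \<beta> \<noteq> 0)"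
    moreover have "qnorm u * s 0 = (fst u + p * snd u) * \<alpha> - snd u * \<beta>"
      "qnorm u * s 1 = fst u * \<beta> - r * snd u * \<alpha>"
      by (simp_all add: qnorm_def \<alpha>_def \<beta>_def functional_def qmult_def algebra_simps)
    ultimately show False
      using u initial_nonzero by simp
  qed
  then have rel_iff: "triple_rel x y z \<longleftrightarrow> z = z0" for z
    by (cases z) (auto simp: triple_rel_def z0_def field_simps functional_Some functional_None
        simp flip: u_def)
  have "z0 \<in> unit_points"
  proof (rule ccontr)
    assume "z0 \<notin> unit_points"
    then obtain a where "z0 = Some a" "char_poly a = 0"
      using not_unit_point by blast
    then show False
      using rel_iff[of z0] functional_qmult_root_point[OF _ u] by (simp add: triple_rel_def u_def)
  qed
  then show ?thesis
    unfolding rel_iff by auto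
qed

lemma triple_rel_None_diagonal: "triple_rel None None None \<longleftrightarrow> s 0 = 0"
  by (simp add: triple_rel_def functional_def qmult_def point_def)

definition diagonal_poly :: "'a poly" where
  "diagonal_poly = [:p * r * s 0 + (p * p + r) * s 1, - 3 * (r * s 0 + p * s 1), 3 * s 1, - s 0:]"

lemma triple_rel_Some_diagonal: "triple_rel (Some t) (Some t) (Some t) \<longleftrightarrow> poly diagonal_poly t = 0"
  unfolding triple_rel_def functional_def qmult_def point_def diagonal_poly_def by (simp; algebra)

lemma diagonal_poly_nonzero:
  assumes "\<forall>t. char_poly t \<noteq> 0"
  shows "diagonal_poly \<noteq> 0"
proof
  assume zero: "diagonal_poly = 0"
  then have "s 0 = 0"
    by (simp add: diagonal_poly_def)
  then have "s 1 \<noteq> 0"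
    using initial_nonzero by simp
  with zero \<open>s 0 = 0\<close> have three: "(3::'a) = 0" and sum: "p * p + r = 0"
    by (simp_all add: diagonal_poly_def)
  have "char_poly (- p) = 3 * (p * p) - (p * p + r)"
    by (simp add: char_poly_def algebra_simps)
  then have "char_poly (- p) = 0"
    by (simp only: three sum) simp
  then show False
    using assms by blast
qed

lemma degree_diagonal_poly: "degree diagonal_poly \<le> (if s 0 = 0 then 2 else 3)"
  by (auto simp: diagonal_poly_def intro!: degree_le)

lemma card_diagonal_no_root:
  assumes "\<forall>t. char_poly t \<noteq> 0"
  shows "card {x. triple_rel x x x} \<le> 3"
proof -
  let ?roots = "Some ` {t. poly diagonal_poly t = 0}"
  let ?infinity = "{x :: 'a option. x = None \<and> s 0 = 0}"
  have "{x. triple_rel x x x} \<subseteq> ?infinity \<union> ?roots"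
  proof
    fix x assume "x \<in> {x. triple_rel x x x}"
    then show "x \<in> ?infinity \<union> ?roots"
      by (cases x) (auto simp: triple_rel_Some_diagonal triple_rel_None_diagonal)
  qed
  then have "card {x. triple_rel x x x} \<le> card (?infinity \<union> ?roots)"
    by (rule card_mono[rotated]) simp
  also have "\<dots> \<le> card ?infinity + card ?roots"
    by (rule card_Un_le)
  also have "card ?roots \<le> (if s 0 = 0 then 2 else 3)"
    using diagonal_poly_nonzero[OF assms] degree_diagonal_poly by (rule card_Some_roots_le)
  also have "card ?infinity = (if s 0 = 0 then 1 else 0)"
    by simp
  finally show ?thesis
    by (simp split: if_splits)
qed

lemma double_root:
  assumes "char_poly a = 0"
  shows "p = 2 * a" "r = - (a * a)"
proof -
  have "char_poly (p - a) = char_poly a"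
    by (simp add: char_poly_def algebra_simps)
  then have "p - a = a"
    using assms char_poly_root_unique by simp
  then show p: "p = 2 * a"
    by (simp add: algebra_simps)
  show "r = - (a * a)"
    using assms unfolding char_poly_def by (simp add: p algebra_simps)
qed

lemma unit_points_double_root:
  assumes "char_poly a = 0"
  shows "unit_points = - {Some a}"
proof -
  have "x \<in> unit_points" if "x \<noteq> Some a" for x
    using that assms not_unit_point char_poly_root_unique by blast
  then show ?thesis
    using assms by (auto simp: unit_points_def qnorm_point)
qed

lemma triple_rel_diagonal_double_root:
  assumes "char_poly a = 0"
  shows "triple_rel (Some t) (Some t) (Some t) \<longleftrightarrow> (a - t) * (a - t) * ((a - t) * s 0 + 3 * (s 1 - a * s 0)) = 0"
proof -
  have "p = 2 * a" "r = - (a * a)"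
    using double_root[OF assms] by simp_all
  then show ?thesis
    unfolding triple_rel_def functional_def qmult_def point_def by simp algebra
qed

lemma card_diagonal_double_root:
  assumes "char_poly a = 0"
  defines "D \<equiv> {x\<in>unit_points. triple_rel x x x}"
  shows "card D \<le> 1 \<or> D = unit_points"
proof -
  define \<kappa> where "\<kappa> = s 1 - a * s 0"
  have "\<kappa> \<noteq> 0"
    using root_initial_nonzero[OF assms(1)] by (simp add: \<kappa>_def)
  have Some_D: "Some t \<in> D \<longleftrightarrow> t \<noteq> a \<and> (a - t) * s 0 + 3 * \<kappa> = 0" for t
    by (auto simp: D_def \<kappa>_def unit_points_double_root[OF assms(1)] triple_rel_diagonal_double_root[OF assms(1)])
  have None_D: "None \<in> D \<longleftrightarrow> s 0 = 0"
    by (simp add: D_def unit_points_double_root[OF assms(1)] triple_rel_None_diagonal)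
  consider "s 0 \<noteq> 0" | "s 0 = 0" "(3::'a) \<noteq> 0" | "s 0 = 0" "(3::'a) = 0"
    by blast
  then show ?thesis
  proof cases
    case 1
    have "D \<subseteq> {Some (a + 3 * \<kappa> / s 0)}"
    proof
      fix x assume "x \<in> D"
      with 1 show "x \<in> {Some (a + 3 * \<kappa> / s 0)}"
        by (cases x) (auto simp: Some_D None_D field_simps)
    qed
    then show ?thesis
      using card_mono[of "{Some (a + 3 * \<kappa> / s 0)}" D] by simp
  next
    case 2
    then have no_Some: "Some t \<notin> D" for t
      using \<open>\<kappa> \<noteq> 0\<close> by (simp add: Some_D)
    have "D \<subseteq> {None}"
    proof
      fix x assume "x \<in> D"
      then show "x \<in> {None}"
        using no_Some by (cases x) auto
    qed
    then show ?thesis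
      using card_mono[of "{None}" D] by simp
  next
    case 3
    then have "x \<in> D" if "x \<in> unit_points" for x
      using that by (cases x) (simp_all add: Some_D None_D unit_points_double_root[OF assms(1)])
    then have "D = unit_points"
      by (auto simp: D_def)
    then show ?thesis ..
  qed
qed

lemma B_count_3_equation_recurrent:
  "\<exists>n e. 6 * B_count 3 V + 3 * n = n * n + 2 * e
     \<and> (n = CARD('a) + 1 \<and> e \<le> 3 \<or> n = CARD('a) \<and> (e \<le> 1 \<or> e = CARD('a)))"
proof -
  let ?D = "{x\<in>unit_points. triple_rel x x x}"
  have equation: "6 * B_count 3 V + 3 * card unit_points = card unit_points * card unit_points + 2 * card ?D"
  proof (rule B_count_3_via_relation[OF _ pairing_annihilator_eq_0_iff])
    show "symmetric_ternary_relation unit_points triple_rel"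
      by unfold_locales (simp_all add: triple_rel_swap12 triple_rel_swap23 triple_rel_unique)
  qed
  show ?thesis
  proof (cases "\<exists>a. char_poly a = 0")
    case True
    then obtain a where a: "char_poly a = 0"
      by blast
    have "card unit_points = CARD('a)"
      by (simp add: unit_points_double_root[OF a] Compl_eq_Diff_UNIV card_Diff_subset)
    then show ?thesis
      using equation card_diagonal_double_root[OF a] by (metis (no_types, lifting))
  next
    case False
    then have "unit_points = UNIV"
      using not_unit_point by blast
    moreover have "card {x. triple_rel x x x} \<le> 3"
      using False card_diagonal_no_root by blast
    ultimately show ?thesis
      using equation by (intro exI[of _ "CARD('a) + 1"] exI[of _ "card ?D"]) simp
  qed
qed

end

lemma (in weight3_coset) exists_recurrence:
  assumes "s 0 \<noteq> 0 \<or> s 1 \<noteq> 0"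
  shows "\<exists>p r. s 2 = p * s 1 + r * s 0 \<and> s 3 = p * s 2 + r * s 1"
proof -
  define \<Delta> where "\<Delta> = s 1 * s 1 - s 0 * s 2"
  have "\<Delta> \<noteq> 0"
  proof
    assume "\<Delta> = 0"
    then have s0: "s 0 \<noteq> 0"
      using assms by (auto simp: \<Delta>_def)
    define a where "a = s 1 / s 0"
    have "s 1 = s 0 * a" "s 2 = s 0 * a ^ 2" "s 3 = s 0 * a ^ 3 + (s 3 - s 0 * a ^ 3)"
      using s0 \<open>\<Delta> = 0\<close> by (simp_all add: a_def \<Delta>_def field_simps power2_eq_square)
    then have "\<forall>i<4. s i = s 0 * column (Some a) i + (s 3 - s 0 * a ^ 3) * column None i"
      by (auto simp: less_4_iff column_def pc_entry_def)
    then show False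
      using syndrome_not_two_columns by blast
  qed
  define p where "p = (s 2 * s 1 - s 0 * s 3) / \<Delta>"
  define r where "r = (s 1 * s 3 - s 2 * s 2) / \<Delta>"
  have "s 2 = p * s 1 + r * s 0" "s 3 = p * s 2 + r * s 1"
    using \<open>\<Delta> \<noteq> 0\<close> unfolding p_def r_def by (simp_all add: field_simps) (simp_all add: \<Delta>_def algebra_simps)
  then show ?thesis
    by blast
qed

lemma values_mod_3:
  fixes q :: nat and B :: int
  assumes "3 dvd B"
    and "(\<exists>c\<in>{-2, 0, 2, 4}. B = int q ^ 2 - int q + c) \<or> (\<exists>c\<in>{0, 2}. B = int q ^ 2 - 3 * int q + c)"
  shows "(q mod 3 = 1 \<longrightarrow> B \<in> {int q^2 - 3 * int q + 2, int q^2 - int q})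
    \<and> (q mod 3 = 2 \<longrightarrow> B \<in> {int q^2 - 3 * int q + 2, int q^2 - int q - 2, int q^2 - int q + 4})
    \<and> (q mod 3 = 0 \<longrightarrow> B \<in> {int q^2 - 3 * int q, int q^2 - int q})"
proof -
  define j k where "j = int q mod 3" and "k = int q div 3"
  have q: "int q = 3 * k + j"
    by (simp add: j_def k_def)
  have j: "j \<in> {0, 1, 2}"
    unfolding j_def by auto
  have q_mod: "q mod 3 = m \<longleftrightarrow> j = int m" for m
    unfolding j_def by (metis of_nat_eq_iff of_nat_mod of_nat_numeral)
  have "int q ^ 2 - int q + c = 3 * (3 * k ^ 2 + 2 * k * j - k) + (j ^ 2 - j + c)"
    "int q ^ 2 - 3 * int q + c = 3 * (3 * k ^ 2 + 2 * k * j - 3 * k - j) + (j ^ 2 + c)" for c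
    by (simp_all add: q power2_eq_square algebra_simps)
  then have "(\<exists>c\<in>{-2, 0, 2, 4}. B = int q ^ 2 - int q + c \<and> 3 dvd j ^ 2 - j + c)
      \<or> (\<exists>c\<in>{0, 2}. B = int q ^ 2 - 3 * int q + c \<and> 3 dvd j ^ 2 + c)"
    using assms by (metis dvd_add_right_iff dvd_triv_left)
  then show ?thesis
    using j by (auto simp: q_mod)
qed

lemma six_b_values_mod_3:
  fixes b q n e :: nat
  assumes "6 * b + 3 * n = n * n + 2 * e"
    and "n = q + 1 \<and> e \<le> 3 \<or> n = q \<and> (e \<le> 1 \<or> e = q)"
  shows "(q mod 3 = 1 \<longrightarrow> 6 * int b \<in> {int q^2 - 3 * int q + 2, int q^2 - int q})
    \<and> (q mod 3 = 2 \<longrightarrow> 6 * int b \<in> {int q^2 - 3 * int q + 2, int q^2 - int q - 2, int q^2 - int q + 4})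
    \<and> (q mod 3 = 0 \<longrightarrow> 6 * int b \<in> {int q^2 - 3 * int q, int q^2 - int q})"
proof (rule values_mod_3)
  have eq: "int (6 * b + 3 * n) = int (n * n + 2 * e)"
    using assms(1) by simp
  consider "n = q + 1" "e \<in> {0, 1, 2, 3}" | "n = q" "e \<in> {0, 1}" | "n = q" "e = q"
    using assms(2) by fastforce
  then show "(\<exists>c\<in>{-2, 0, 2, 4}. 6 * int b = int q ^ 2 - int q + c)
      \<or> (\<exists>c\<in>{0, 2}. 6 * int b = int q ^ 2 - 3 * int q + c)"
    using eq by cases (auto simp: power2_eq_square algebra_simps)
qed simp

lemma (in weight3_coset) B_count_3_equation_general:
  "\<exists>n e. 6 * B_count 3 V + 3 * n = n * n + 2 * e
     \<and> (n = CARD('a) + 1 \<and> e \<le> 3 \<or> n = CARD('a) \<and> (e \<le> 1 \<or> e = CARD('a)))"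
proof (cases "s 0 = 0 \<and> s 1 = 0")
  case True
  then show ?thesis
    using B_count_3_equation_s01 by blast
next
  case False
  then obtain p r where "s 2 = p * s 1 + r * s 0" "s 3 = p * s 2 + r * s 1"
    using exists_recurrence by blast
  then interpret recurrent_weight3_coset v p r
    using False by unfold_locales auto
  show ?thesis
    by (rule B_count_3_equation_recurrent)
qed

lemma (in weight3_coset) B_count_less_3: "k < 3 \<Longrightarrow> B_count k V = 0"
  using hweight_ge_3 by (fastforce simp: B_count_def)

theorem theorem4p4:
  fixes v :: "'a::{field,finite} option \<Rightarrow> 'a"
  defines "q \<equiv> card (UNIV :: 'a set)"
  defines "V \<equiv> coset_of v"
  assumes "q \<ge> 5"
    and "coset_weight V = 3"
  shows "B_count 0 V = 0 \<and> B_count 1 V = 0 \<and> B_count 2 V = 0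
    \<and> (q mod 3 = 1 \<longrightarrow> 6 * int (B_count 3 V) \<in> {int q^2 - 3 * int q + 2, int q^2 - int q})
    \<and> (q mod 3 = 2 \<longrightarrow> 6 * int (B_count 3 V) \<in>
          {int q^2 - 3 * int q + 2, int q^2 - int q - 2, int q^2 - int q + 4})
    \<and> (q mod 3 = 0 \<longrightarrow> 6 * int (B_count 3 V) \<in> {int q^2 - 3 * int q, int q^2 - int q})
    \<and> int (B_count 4 V) = int ((q + 1) choose 4) - (int q - 2) * int (B_count 3 V)
    \<and> (\<forall>w\<ge>5. int (B_count w V) = int (A_count w (arc_code :: ('a option \<Rightarrow> 'a) set))
          + (-1) ^ w * (int ((q + 1) choose w) * int ((w - 1) choose 3)
                        - int ((q - 2) choose (w - 3)) * int (B_count 3 V)))"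
proof -
  interpret weight3_coset v
    using assms(3,4) by unfold_locales (simp_all add: q_def V_def)
  obtain n e where "6 * B_count 3 V + 3 * n = n * n + 2 * e"
      "n = q + 1 \<and> e \<le> 3 \<or> n = q \<and> (e \<le> 1 \<or> e = q)"
    using B_count_3_equation_general unfolding q_def V_def by blast
  note B3 = six_b_values_mod_3[OF this]
  have "int (B_count 4 V) = int ((q + 1) choose 4) - int (q - 2) * int (B_count 3 V)"
    using B_count_V[of 4] A_count_4_arc_code by (simp add: q_def V_def)
  moreover have "int (q - 2) = int q - 2"
    using assms(3) by simp
  ultimately show ?thesis
    using B3 B_count_less_3 B_count_V by (simp add: q_def V_def)
qed

end
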